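(* Let $0<a<1$, $0<b<1$ and $\epsilon>0$, and let $I\in\mathbb{R}$ and $\gamma\ge 0$. Consider the system \begin{align*} \dot y_A &= y_A-\tfrac{y_A^3}{3}-a-z_A+I, & \dot z_A &= \epsilon(y_A-bz_A),\\ \dot y_B &= y_B-\tfrac{y_B^3}{3}-a-z_B+\gamma(y_A-y_B), & \dot z_B &= \epsilon(y_B-bz_B). \end{align*} Then for every fixed $I$ and $\gamma$ the system has a unique equilibrium point $\mathbf{p}_*=(y_{A*},z_{A*},y_{B*},z_{B*})$. Define $$\sigma_1(I,\gamma)=1-b\epsilon-y_{A*}^2,\qquad \sigma_2(I,\gamma)=1-b\epsilon-\gamma-y_{B*}^2.$$ Then: (1) $\mathbf{p}_*$ is nonhyperbolic if $\sigma_1(I,\gamma)=0$ or $\sigma_2(I,\gamma)=0$; (2) $\mathbf{p}_*$ is hyperbolic if $\sigma_1(I,\gamma)\neq 0$ and $\sigma_2(I,\gamma)\neq 0$; in that case $\mathbf{p}_*$ is attracting if $\sigma_1<0$ and $\sigma_2<0$, repelling if $\sigma_1>0$ and $\sigma_2>0$, and a saddle if $\sigma_1\sigma_2<0$.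
   Context: This is the directed (unidirectionally coupled) two-FitzHugh–Nagumo system: neuron $A$ receives external input $I$, neuron $B$ receives no input and is coupled from $A$ with coupling strength $\gamma$. The paper's standing assumption (Assumption 1) is that the parameters are such that a single FitzHugh–Nagumo neuron $\dot y=y-y^3/3-a-z+I$, $\dot z=\epsilon(y-bz)$ has a unique equilibrium for all $I\ge 0$, which the paper states amounts to $0<a<1$ and $0<b<1$; $\epsilon$ is a small positive timescale separation constant. *)

theory Defs
  imports "HOL-Analysis.Analysis"
begin

text \<open>State vector p = (y_A, z_A, y_B, z_B) in real^4, components p$1, p$2, p$3, p$4.\<close>

definition fn2_field :: "real \<Rightarrow> real \<Rightarrow> real \<Rightarrow> real \<Rightarrow> real \<Rightarrow> real^4 \<Rightarrow> real^4" where
  "fn2_field a b \<epsilon> I \<gamma> p =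
     vector [ p$1 - (p$1)^3/3 - a - p$2 + I,
              \<epsilon> * (p$1 - b * p$2),
              p$3 - (p$3)^3/3 - a - p$4 + \<gamma> * (p$1 - p$3),
              \<epsilon> * (p$3 - b * p$4) ]"

definition jacobian_at :: "(real^'n \<Rightarrow> real^'n) \<Rightarrow> real^'n \<Rightarrow> real^'n^'n" where
  "jacobian_at F p = matrix (frechet_derivative F (at p))"

definition real_mat_eigenvalue :: "real^'n^'n \<Rightarrow> complex \<Rightarrow> bool" where
  "real_mat_eigenvalue A c \<longleftrightarrow>
     (\<exists>v :: complex^'n. v \<noteq> 0 \<and> (\<chi> i j. complex_of_real (A $ i $ j)) *v v = c *s v)"

definition equilibrium :: "(real^'n \<Rightarrow> real^'n) \<Rightarrow> real^'n \<Rightarrow> bool" where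
  "equilibrium F p \<longleftrightarrow> F p = 0"

definition hyperbolic_eq :: "(real^'n \<Rightarrow> real^'n) \<Rightarrow> real^'n \<Rightarrow> bool" where
  "hyperbolic_eq F p \<longleftrightarrow> equilibrium F p \<and> F differentiable (at p) \<and>
     (\<forall>c. real_mat_eigenvalue (jacobian_at F p) c \<longrightarrow> Re c \<noteq> 0)"

definition nonhyperbolic_eq :: "(real^'n \<Rightarrow> real^'n) \<Rightarrow> real^'n \<Rightarrow> bool" where
  "nonhyperbolic_eq F p \<longleftrightarrow> equilibrium F p \<and> F differentiable (at p) \<and>
     (\<exists>c. real_mat_eigenvalue (jacobian_at F p) c \<and> Re c = 0)"

definition attracting_eq :: "(real^'n \<Rightarrow> real^'n) \<Rightarrow> real^'n \<Rightarrow> bool" where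
  "attracting_eq F p \<longleftrightarrow> equilibrium F p \<and> F differentiable (at p) \<and>
     (\<forall>c. real_mat_eigenvalue (jacobian_at F p) c \<longrightarrow> Re c < 0)"

definition repelling_eq :: "(real^'n \<Rightarrow> real^'n) \<Rightarrow> real^'n \<Rightarrow> bool" where
  "repelling_eq F p \<longleftrightarrow> equilibrium F p \<and> F differentiable (at p) \<and>
     (\<forall>c. real_mat_eigenvalue (jacobian_at F p) c \<longrightarrow> Re c > 0)"

definition saddle_eq :: "(real^'n \<Rightarrow> real^'n) \<Rightarrow> real^'n \<Rightarrow> bool" where
  "saddle_eq F p \<longleftrightarrow> hyperbolic_eq F p \<and>
     (\<exists>c. real_mat_eigenvalue (jacobian_at F p) c \<and> Re c < 0) \<and>
     (\<exists>c. real_mat_eigenvalue (jacobian_at F p) c \<and> Re c > 0)"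

end

theory Submission
  imports Defs
begin

(* The equilibrium equations decouple: z = y / b in each neuron, y_A is the unique zero of a
   strictly decreasing cubic, and given y_A so is y_B. The Jacobian is block lower triangular
   with diagonal blocks [[alpha, -1], [eps, -b eps]], where alpha = 1 - y_A^2 resp.
   alpha = 1 - gamma - y_B^2, so its eigenvalues are the roots of the two block characteristic
   polynomials. Since alpha <= 1 and b < 1 both blocks have positive determinant eps (1 - alpha b),
   and then the real parts of the roots have the sign of the trace alpha - b eps, which is
   sigma_1 resp. sigma_2. *)

definition charpoly2 :: "'a::comm_ring_1 \<Rightarrow> 'a \<Rightarrow> 'a \<Rightarrow> 'a \<Rightarrow> 'a \<Rightarrow> 'a" where
  "charpoly2 p q r s c = c^2 - (p + s) * c + (p * s - q * r)"

lemma eigenvector2_iff_charpoly2: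
  fixes p q r s c :: "'a::field"
  shows "(\<exists>u1 u2. (u1 \<noteq> 0 \<or> u2 \<noteq> 0) \<and> p * u1 + q * u2 = c * u1 \<and> r * u1 + s * u2 = c * u2)
    \<longleftrightarrow> charpoly2 p q r s c = 0"
proof
  assume "\<exists>u1 u2. (u1 \<noteq> 0 \<or> u2 \<noteq> 0) \<and> p * u1 + q * u2 = c * u1 \<and> r * u1 + s * u2 = c * u2"
  then obtain u1 u2 where nz: "u1 \<noteq> 0 \<or> u2 \<noteq> 0"
    and e1: "(p - c) * u1 + q * u2 = 0" and e2: "r * u1 + (s - c) * u2 = 0"
    by (auto simp: algebra_simps)
  have "charpoly2 p q r s c * u1 = (s - c) * ((p - c) * u1 + q * u2) - q * (r * u1 + (s - c) * u2)"
    and "charpoly2 p q r s c * u2 = (p - c) * (r * u1 + (s - c) * u2) - r * ((p - c) * u1 + q * u2)"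
    by (simp_all add: charpoly2_def power2_eq_square algebra_simps)
  then show "charpoly2 p q r s c = 0"
    using nz e1 e2 by auto
next
  assume char: "charpoly2 p q r s c = 0"
  show "\<exists>u1 u2. (u1 \<noteq> 0 \<or> u2 \<noteq> 0) \<and> p * u1 + q * u2 = c * u1 \<and> r * u1 + s * u2 = c * u2"
  proof (cases "q = 0")
    case False
    then show ?thesis
      using char by (intro exI[of _ q] exI[of _ "c - p"])
        (simp add: charpoly2_def power2_eq_square algebra_simps)
  next
    case True
    then have "(c - p) * (c - s) = 0"
      using char by (simp add: charpoly2_def power2_eq_square algebra_simps)
    then consider "c = s" | "c = p" "c \<noteq> s" by auto
    then show ?thesis
    proof cases
      case 1
      then show ?thesis using True by (intro exI[of _ 0] exI[of _ 1]) simp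
    next
      case 2
      then show ?thesis using True by (intro exI[of _ "c - s"] exI[of _ r]) (simp add: algebra_simps)
    qed
  qed
qed

lemma linear_system2_solvable:
  fixes m11 m12 m21 m22 r1 r2 :: "'a::field"
  assumes "m11 * m22 - m12 * m21 \<noteq> 0"
  shows "\<exists>x y. m11 * x + m12 * y = r1 \<and> m21 * x + m22 * y = r2"
proof -
  let ?d = "m11 * m22 - m12 * m21"
  have "m11 * (m22 * r1 - m12 * r2) + m12 * (m11 * r2 - m21 * r1) = ?d * r1"
    and "m21 * (m22 * r1 - m12 * r2) + m22 * (m11 * r2 - m21 * r1) = ?d * r2"
    by (simp_all add: algebra_simps)
  then have "m11 * ((m22 * r1 - m12 * r2) / ?d) + m12 * ((m11 * r2 - m21 * r1) / ?d) = r1"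
    and "m21 * ((m22 * r1 - m12 * r2) / ?d) + m22 * ((m11 * r2 - m21 * r1) / ?d) = r2"
    using assms by (simp_all add: add_divide_distrib[symmetric])
  then show ?thesis by blast
qed

lemma charpoly2_has_complex_root: "\<exists>c::complex. charpoly2 p q r s c = 0"
proof -
  let ?T = "p + s" and ?D = "p * s - q * r"
  define c where "c = ?T / 2 + csqrt (?T^2 / 4 - ?D)"
  have "charpoly2 p q r s c = (c - ?T / 2)^2 - (?T^2 / 4 - ?D)"
    by (simp add: charpoly2_def power2_eq_square field_simps)
  then have "charpoly2 p q r s c = 0" by (simp add: c_def)
  then show ?thesis by blast
qed

lemma charpoly2_root_sgn_Re:
  fixes p q r s :: real and c :: complex
  assumes "charpoly2 (of_real p) (of_real q) (of_real r) (of_real s) c = 0" and "p * s - q * r > 0"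
  shows "sgn (Re c) = sgn (p + s)"
proof -
  let ?x = "Re c" and ?y = "Im c"
  have re: "?x * (?x - (p + s)) = ?y^2 - (p * s - q * r)" and im: "?y * (2 * ?x - (p + s)) = 0"
    using arg_cong[OF assms(1), of Re] arg_cong[OF assms(1), of Im]
    by (simp_all add: charpoly2_def power2_eq_square algebra_simps)
  show ?thesis
  proof (cases "?y = 0")
    case True
    then have "?x * (?x - (p + s)) < 0" using re assms(2) by simp
    then show ?thesis by (auto simp: mult_less_0_iff sgn_real_def)
  next
    case False
    then have "2 * ?x = p + s" using im by simp
    then show ?thesis by (auto simp: sgn_real_def)
  qed
qed

lemma sgn_Re_charpoly2_roots:
  fixes p q r s :: real
  assumes "p * s - q * r > 0"
  shows "(\<lambda>c. sgn (Re c)) ` {c. charpoly2 (of_real p) (of_real q) (of_real r) (of_real s) c = 0}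
    = {sgn (p + s)}"
proof -
  obtain c0 :: complex where "charpoly2 (of_real p) (of_real q) (of_real r) (of_real s) c0 = 0"
    using charpoly2_has_complex_root by blast
  then show ?thesis
    using charpoly2_root_sgn_Re[OF _ assms] by (auto intro: rev_image_eqI[of c0])
qed

lemma vector_4 [simp]:
  "(vector [x, y, z, w] :: ('a::zero)^4)$1 = x"
  "(vector [x, y, z, w] :: ('a::zero)^4)$2 = y"
  "(vector [x, y, z, w] :: ('a::zero)^4)$3 = z"
  "(vector [x, y, z, w] :: ('a::zero)^4)$4 = w"
  unfolding vector_def by simp_all

lemma block_triangular_eigenvalue_iff:
  fixes M :: "'a::field^4^4"
  assumes "M$1$3 = 0" "M$1$4 = 0" "M$2$3 = 0" "M$2$4 = 0"
  shows "(\<exists>v. v \<noteq> 0 \<and> M *v v = c *s v) \<longleftrightarrow>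
    charpoly2 (M$1$1) (M$1$2) (M$2$1) (M$2$2) c = 0 \<or> charpoly2 (M$3$3) (M$3$4) (M$4$3) (M$4$4) c = 0"
    (is "_ \<longleftrightarrow> ?upper \<or> ?lower")
proof -
  have eigen_eqs: "M *v v = c *s v \<longleftrightarrow>
      M$1$1 * v$1 + M$1$2 * v$2 = c * v$1 \<and> M$2$1 * v$1 + M$2$2 * v$2 = c * v$2 \<and>
      M$3$1 * v$1 + M$3$2 * v$2 + (M$3$3 * v$3 + M$3$4 * v$4) = c * v$3 \<and>
      M$4$1 * v$1 + M$4$2 * v$2 + (M$4$3 * v$3 + M$4$4 * v$4) = c * v$4" for v
    by (simp add: vec_eq_iff forall_4 matrix_vector_mult_def sum_4 assms add.assoc)
  have nonzero: "v \<noteq> 0 \<longleftrightarrow> v$1 \<noteq> 0 \<or> v$2 \<noteq> 0 \<or> v$3 \<noteq> 0 \<or> v$4 \<noteq> 0" for v :: "'a^4"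
    by (simp add: vec_eq_iff forall_4)
  show ?thesis
  proof
    assume "\<exists>v. v \<noteq> 0 \<and> M *v v = c *s v"
    then obtain v where "v \<noteq> 0" and "M *v v = c *s v" by blast
    then show "?upper \<or> ?lower"
      unfolding eigenvector2_iff_charpoly2[symmetric] nonzero eigen_eqs
      by (metis add_0 mult_zero_right)
  next
    assume "?upper \<or> ?lower"
    then consider "?lower" | "?upper" "\<not> ?lower" by blast
    then show "\<exists>v. v \<noteq> 0 \<and> M *v v = c *s v"
    proof cases
      case 1
      then obtain w1 w2 where "w1 \<noteq> 0 \<or> w2 \<noteq> 0"
        and "M$3$3 * w1 + M$3$4 * w2 = c * w1" "M$4$3 * w1 + M$4$4 * w2 = c * w2"
        unfolding eigenvector2_iff_charpoly2[symmetric] by blast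
      then show ?thesis
        by (intro exI[of _ "vector [0, 0, w1, w2]"]) (simp add: nonzero eigen_eqs)
    next
      case 2
      \<comment> \<open>Extend an eigenvector u of the upper block to (u, w) by solving (B - c) w = - C u,
         where B - c is invertible because its determinant is the lower block's charpoly2 at c.\<close>
      then obtain u1 u2 where "u1 \<noteq> 0 \<or> u2 \<noteq> 0"
        and "M$1$1 * u1 + M$1$2 * u2 = c * u1" "M$2$1 * u1 + M$2$2 * u2 = c * u2"
        unfolding eigenvector2_iff_charpoly2[symmetric] by blast
      moreover
      have "(M$3$3 - c) * (M$4$4 - c) - M$3$4 * M$4$3 \<noteq> 0"
        using 2 by (simp add: charpoly2_def power2_eq_square algebra_simps)
      then obtain w1 w2 where
        "(M$3$3 - c) * w1 + M$3$4 * w2 = - (M$3$1 * u1 + M$3$2 * u2)"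
        "M$4$3 * w1 + (M$4$4 - c) * w2 = - (M$4$1 * u1 + M$4$2 * u2)"
        using linear_system2_solvable by blast
      ultimately show ?thesis
        by (intro exI[of _ "vector [u1, u2, w1, w2]"])
          (auto simp: nonzero eigen_eqs algebra_simps)
    qed
  qed
qed

lemma real_mat_eigenvalue_block_triangular_iff:
  fixes A :: "real^4^4"
  assumes "A$1$3 = 0" "A$1$4 = 0" "A$2$3 = 0" "A$2$4 = 0"
  shows "real_mat_eigenvalue A c \<longleftrightarrow>
    charpoly2 (of_real (A$1$1)) (of_real (A$1$2)) (of_real (A$2$1)) (of_real (A$2$2)) c = 0 \<or>
    charpoly2 (of_real (A$3$3)) (of_real (A$3$4)) (of_real (A$4$3)) (of_real (A$4$4)) c = 0"
  unfolding real_mat_eigenvalue_def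
  by (subst block_triangular_eigenvalue_iff) (simp_all add: assms)

lemma equilibrium_classification_by_signs:
  fixes \<sigma>\<^sub>1 \<sigma>\<^sub>2 :: real
  assumes "equilibrium F p" "F differentiable (at p)"
    and "(\<lambda>c. sgn (Re c)) ` {c. real_mat_eigenvalue (jacobian_at F p) c} = {sgn \<sigma>\<^sub>1, sgn \<sigma>\<^sub>2}"
  shows "((\<sigma>\<^sub>1 = 0 \<or> \<sigma>\<^sub>2 = 0) \<longrightarrow> nonhyperbolic_eq F p) \<and>
    ((\<sigma>\<^sub>1 \<noteq> 0 \<and> \<sigma>\<^sub>2 \<noteq> 0) \<longrightarrow>
       hyperbolic_eq F p \<and>
       (\<sigma>\<^sub>1 < 0 \<and> \<sigma>\<^sub>2 < 0 \<longrightarrow> attracting_eq F p) \<and>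
       (\<sigma>\<^sub>1 > 0 \<and> \<sigma>\<^sub>2 > 0 \<longrightarrow> repelling_eq F p) \<and>
       (\<sigma>\<^sub>1 * \<sigma>\<^sub>2 < 0 \<longrightarrow> saddle_eq F p))"
proof -
  let ?E = "real_mat_eigenvalue (jacobian_at F p)"
  have sgn_eq: "sgn x = sgn y \<longleftrightarrow> (x < 0 \<longleftrightarrow> y < 0) \<and> (x = 0 \<longleftrightarrow> y = 0) \<and> (0 < x \<longleftrightarrow> 0 < y)"
    for x y :: real
    by (auto simp: sgn_real_def)
  have all: "sgn (Re c) = sgn \<sigma>\<^sub>1 \<or> sgn (Re c) = sgn \<sigma>\<^sub>2" if "?E c" for c
    using that assms(3) by blast
  have ex1: "\<exists>c. ?E c \<and> sgn (Re c) = sgn \<sigma>\<^sub>1" and ex2: "\<exists>c. ?E c \<and> sgn (Re c) = sgn \<sigma>\<^sub>2"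
    using assms(3) by (metis (mono_tags, lifting) imageE insertCI mem_Collect_eq)+
  have nonhyperbolic: "nonhyperbolic_eq F p" if "\<sigma>\<^sub>1 = 0 \<or> \<sigma>\<^sub>2 = 0"
    unfolding nonhyperbolic_eq_def using assms(1,2) ex1 ex2 that sgn_eq by metis
  have hyperbolic: "hyperbolic_eq F p" if "\<sigma>\<^sub>1 \<noteq> 0" "\<sigma>\<^sub>2 \<noteq> 0"
    unfolding hyperbolic_eq_def using assms(1,2) all that sgn_eq by metis
  have attracting: "attracting_eq F p" if "\<sigma>\<^sub>1 < 0" "\<sigma>\<^sub>2 < 0"
    unfolding attracting_eq_def using assms(1,2) all that sgn_eq by metis
  have repelling: "repelling_eq F p" if "\<sigma>\<^sub>1 > 0" "\<sigma>\<^sub>2 > 0"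
    unfolding repelling_eq_def using assms(1,2) all that sgn_eq by metis
  have saddle: "saddle_eq F p" if "\<sigma>\<^sub>1 * \<sigma>\<^sub>2 < 0"
  proof -
    have "\<sigma>\<^sub>1 < 0 \<and> \<sigma>\<^sub>2 > 0 \<or> \<sigma>\<^sub>1 > 0 \<and> \<sigma>\<^sub>2 < 0"
      using that by (auto simp: mult_less_0_iff)
    then show ?thesis
      unfolding saddle_eq_def using hyperbolic ex1 ex2 sgn_eq by (metis less_irrefl)
  qed
  show ?thesis
    using nonhyperbolic hyperbolic attracting repelling saddle by blast
qed

lemma cubic_unique_root:
  fixes k m :: real
  assumes "k \<le> 0"
  shows "\<exists>!y. m + k * y - y^3 / 3 = 0"
proof -
  define h where "h y = m + k * y - y^3 / 3" for y
  have cube_less: "y^3 < z^3" if "y < z" for y z :: real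
    using that by (metis odd_real_root_power_cancel real_root_less_iff odd_numeral zero_less_numeral)
  have decreasing: "h z < h y" if "y < z" for y z
    using cube_less[OF that] mult_left_mono_neg[OF less_imp_le[OF that] assms] by (simp add: h_def)
  define M where "M = \<bar>m\<bar> + 3"
  have "3 \<le> M" by (simp add: M_def)
  then have "9 * M \<le> M^3"
    using mult_mono[of 3 M 3 M] mult_right_mono[of 9 "M * M" M] by (simp add: power3_eq_cube)
  moreover have "k * M \<le> 0" "\<bar>m\<bar> \<le> M"
    using assms \<open>3 \<le> M\<close> by (simp_all add: mult_nonpos_nonneg M_def)
  ultimately have "h M \<le> 0" "0 \<le> h (- M)"
    unfolding h_def by (simp_all add: abs_le_iff)
  moreover have "continuous_on {- M..M} h"
    unfolding h_def by (intro continuous_intros) auto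
  ultimately obtain y where "h y = 0"
    using IVT2'[of h M 0 "- M"] by (auto simp: M_def)
  moreover have "z = y" if "h z = 0" for z
    using decreasing[of y z] decreasing[of z y] that \<open>h y = 0\<close> by (cases y z rule: linorder_cases) auto
  ultimately show ?thesis unfolding h_def by blast
qed

lemma equilibrium_fn2_field_iff:
  assumes "b \<noteq> 0" "\<epsilon> \<noteq> 0"
  shows "equilibrium (fn2_field a b \<epsilon> I \<gamma>) p \<longleftrightarrow>
    (I - a) + (1 - 1 / b) * p$1 - (p$1)^3 / 3 = 0 \<and> p$2 = p$1 / b \<and>
    (\<gamma> * p$1 - a) + (1 - 1 / b - \<gamma>) * p$3 - (p$3)^3 / 3 = 0 \<and> p$4 = p$3 / b"
proof -
  have "p$1 - b * p$2 = 0 \<longleftrightarrow> p$2 = p$1 / b" "p$3 - b * p$4 = 0 \<longleftrightarrow> p$4 = p$3 / b"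
    using assms by (auto simp: field_simps)
  then show ?thesis
    unfolding equilibrium_def fn2_field_def using assms
    by (auto simp: vec_eq_iff forall_4 algebra_simps)
qed

lemma fn2_field_unique_equilibrium:
  assumes "0 < b" "b \<le> 1" "\<epsilon> \<noteq> 0" "0 \<le> \<gamma>"
  shows "\<exists>!p. equilibrium (fn2_field a b \<epsilon> I \<gamma>) p"
proof -
  have k1: "1 - 1 / b \<le> 0"
    using assms by (simp add: field_simps)
  then have k2: "1 - 1 / b - \<gamma> \<le> 0"
    using assms(4) by linarith
  have b0: "b \<noteq> 0"
    using assms(1) by simp
  obtain y1 where y1: "\<And>y. (I - a) + (1 - 1 / b) * y - y^3 / 3 = 0 \<longleftrightarrow> y = y1"
    using cubic_unique_root[OF k1] by metis
  obtain y3 where y3: "\<And>y. (\<gamma> * y1 - a) + (1 - 1 / b - \<gamma>) * y - y^3 / 3 = 0 \<longleftrightarrow> y = y3"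
    using cubic_unique_root[OF k2] by metis
  have "equilibrium (fn2_field a b \<epsilon> I \<gamma>) p \<longleftrightarrow> p = vector [y1, y1 / b, y3, y3 / b]" for p
    unfolding equilibrium_fn2_field_iff[OF b0 assms(3)] y1 vec_eq_iff forall_4 vector_4
    using y3 by metis
  then show ?thesis by auto
qed

definition fn2_jacobian :: "real \<Rightarrow> real \<Rightarrow> real \<Rightarrow> real^4 \<Rightarrow> real^4^4" where
  "fn2_jacobian b \<epsilon> \<gamma> p = vector [
     vector [1 - (p$1)^2, -1, 0, 0],
     vector [\<epsilon>, - (b * \<epsilon>), 0, 0],
     vector [\<gamma>, 0, 1 - \<gamma> - (p$3)^2, -1],
     vector [0, 0, \<epsilon>, - (b * \<epsilon>)]]"

lemma has_derivative_vec_nth [derivative_intros]: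
  "((\<lambda>x. x $ i) has_derivative (\<lambda>h. h $ i)) F"
  by (rule bounded_linear_imp_has_derivative) (rule bounded_linear_vec_nth)

lemma fn2_jacobian_mult_vec:
  "fn2_jacobian b \<epsilon> \<gamma> p *v h = vector [
     (1 - (p$1)^2) * h$1 - h$2,
     \<epsilon> * (h$1 - b * h$2),
     \<gamma> * h$1 + (1 - \<gamma> - (p$3)^2) * h$3 - h$4,
     \<epsilon> * (h$3 - b * h$4)]"
  by (simp add: fn2_jacobian_def vec_eq_iff forall_4 matrix_vector_mult_def sum_4 algebra_simps)

lemma fn2_field_has_derivative:
  "(fn2_field a b \<epsilon> I \<gamma> has_derivative (*v) (fn2_jacobian b \<epsilon> \<gamma> p)) (at p)"
proof (subst has_derivative_componentwise_within, intro ballI)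
  fix i :: "real^4"
  assume "i \<in> Basis"
  then obtain k where k: "i = axis k 1" by (auto simp: Basis_vec_def)
  show "((\<lambda>x. fn2_field a b \<epsilon> I \<gamma> x \<bullet> i) has_derivative (\<lambda>h. (fn2_jacobian b \<epsilon> \<gamma> p *v h) \<bullet> i)) (at p)"
    unfolding k inner_axis fn2_field_def fn2_jacobian_mult_vec
    using exhaust_4[of k]
    by (elim disjE; simp)
      (rule derivative_eq_intros refl | rule ext | simp add: power2_eq_square algebra_simps)+
qed

lemma jacobian_at_fn2_field: "jacobian_at (fn2_field a b \<epsilon> I \<gamma>) p = fn2_jacobian b \<epsilon> \<gamma> p"
  unfolding jacobian_at_def frechet_derivative_at[OF fn2_field_has_derivative, symmetric] by simp

lemma fn2_jacobian_eigenvalue_signs: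
  assumes "0 < b" "b < 1" "0 < \<epsilon>" "0 \<le> \<gamma>"
  shows "(\<lambda>c. sgn (Re c)) ` {c. real_mat_eigenvalue (fn2_jacobian b \<epsilon> \<gamma> p) c} =
    {sgn (1 - b * \<epsilon> - (p$1)^2), sgn (1 - b * \<epsilon> - \<gamma> - (p$3)^2)}"
proof -
  let ?block = "\<lambda>\<alpha>. {c. charpoly2 (of_real \<alpha>) (of_real (-1)) (of_real \<epsilon>) (of_real (- (b * \<epsilon>))) c = 0}"
  have eigenvalues: "{c. real_mat_eigenvalue (fn2_jacobian b \<epsilon> \<gamma> p) c} =
      ?block (1 - (p$1)^2) \<union> ?block (1 - \<gamma> - (p$3)^2)"
    by (subst real_mat_eigenvalue_block_triangular_iff) (auto simp: fn2_jacobian_def)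
  have block_signs: "(\<lambda>c. sgn (Re c)) ` ?block \<alpha> = {sgn (\<alpha> - b * \<epsilon>)}" if "\<alpha> \<le> 1" for \<alpha>
  proof -
    have "\<alpha> * b < 1"
      using mult_right_mono[OF that, of b] assms(1,2) by linarith
    then have "0 < \<epsilon> * (1 - \<alpha> * b)"
      using assms(3) by simp
    then show ?thesis
      using sgn_Re_charpoly2_roots[of \<alpha> "- (b * \<epsilon>)" "-1" \<epsilon>] by (simp add: algebra_simps)
  qed
  have "1 - (p$1)^2 \<le> 1" and "1 - \<gamma> - (p$3)^2 \<le> 1"
    using assms(4) zero_le_power2[of "p$3"] by (simp, linarith)
  then show ?thesis
    unfolding eigenvalues image_Un block_signs[OF \<open>1 - (p$1)^2 \<le> 1\<close>]
      block_signs[OF \<open>1 - \<gamma> - (p$3)^2 \<le> 1\<close>]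
    by (simp add: algebra_simps insert_commute)
qed

theorem proposition3:
  fixes a b \<epsilon> I \<gamma> :: real
  assumes "0 < a" "a < 1" "0 < b" "b < 1" "0 < \<epsilon>" "0 \<le> \<gamma>"
  shows "(\<exists>!p. equilibrium (fn2_field a b \<epsilon> I \<gamma>) p) \<and>
    (\<forall>p. equilibrium (fn2_field a b \<epsilon> I \<gamma>) p \<longrightarrow>
      (let F = fn2_field a b \<epsilon> I \<gamma>;
           \<sigma>\<^sub>1 = 1 - b * \<epsilon> - (p$1)^2;
           \<sigma>\<^sub>2 = 1 - b * \<epsilon> - \<gamma> - (p$3)^2
       in ((\<sigma>\<^sub>1 = 0 \<or> \<sigma>\<^sub>2 = 0) \<longrightarrow> nonhyperbolic_eq F p) \<and>
          ((\<sigma>\<^sub>1 \<noteq> 0 \<and> \<sigma>\<^sub>2 \<noteq> 0) \<longrightarrow>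
             hyperbolic_eq F p \<and>
             (\<sigma>\<^sub>1 < 0 \<and> \<sigma>\<^sub>2 < 0 \<longrightarrow> attracting_eq F p) \<and>
             (\<sigma>\<^sub>1 > 0 \<and> \<sigma>\<^sub>2 > 0 \<longrightarrow> repelling_eq F p) \<and>
             (\<sigma>\<^sub>1 * \<sigma>\<^sub>2 < 0 \<longrightarrow> saddle_eq F p))))"
proof (rule conjI[OF _ allI[OF impI]], goal_cases)
  case 1
  show ?case
    using assms by (intro fn2_field_unique_equilibrium) auto
next
  case (2 p)
  have "fn2_field a b \<epsilon> I \<gamma> differentiable (at p)"
    using fn2_field_has_derivative unfolding differentiable_def by blast
  moreover have "(\<lambda>c. sgn (Re c)) ` {c. real_mat_eigenvalue (jacobian_at (fn2_field a b \<epsilon> I \<gamma>) p) c} =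
      {sgn (1 - b * \<epsilon> - (p$1)^2), sgn (1 - b * \<epsilon> - \<gamma> - (p$3)^2)}"
    unfolding jacobian_at_fn2_field using assms by (intro fn2_jacobian_eigenvalue_signs) auto
  ultimately show ?case
    unfolding Let_def by (rule equilibrium_classification_by_signs[OF 2])
qed

end
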